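(* Let $Q$ be a quantity space over a field $K$, and let $\mathsf{E}=\{\mathsf{e}_1,\ldots,\mathsf{e}_n\}$ be a basis for the abelian group $Q/{\sim}$. Then there is a subset $E=\{e_1,\ldots,e_n\}$ of $Q$ such that $e_i\in\mathsf{e}_i$ for each $i$ and $E$ is a basis for $Q$.
   Context: A scalable monoid over a (unital, associative) ring $R$ is a monoid $X$ (identity $1_X$, product written $xy$) together with a map $R\times X\to X$, $(\alpha,x)\mapsto\alpha\cdot x$, such that $1\cdot x=x$, $\alpha\cdot(\beta\cdot x)=\alpha\beta\cdot x$ and $\alpha\cdot(xy)=(\alpha\cdot x)y=x(\alpha\cdot y)$. A quantity space over a field $K$ is a commutative scalable monoid $Q$ over $K$ for which there exists a basis, i.e. a finite set $\{e_1,\ldots,e_n\}$ of invertible elements of $Q$ such that every $x\in Q$ has a unique expansion $x=\mu\cdot\prod_{i=1}^n e_i^{k_i}$ with $\mu\in K$ and $k_i\in\mathbb{Z}$. On $Q$, $x\sim y$ means $\alpha\cdot x=\beta\cdot y$ for some $\alpha,\beta\in K$; $[x]$ is the class of $x$; $Q/{\sim}$ is the set of classes with $[x][y]=[xy]$, an abelian group. A basis of a finitely generated abelian group $G$ is a set $\{\varepsilon_1,\ldots,\varepsilon_n\}\subseteq G$ such that every $g\in G$ has a unique expansion $g=\prod_{i=1}^n\varepsilon_i^{k_i}$ with $k_i\in\mathbb{Z}$. *)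

theory Defs
  imports "HOL-Algebra.Algebra"
begin

text \<open>A quantity space Q over a field K is modelled by a type 'q carrying a commutative
  monoid structure (type class comm_monoid_mult) together with a scalar action
  smul :: 'k \<Rightarrow> 'q \<Rightarrow> 'q, where 'k is a field.\<close>

definition scalable_monoid :: "('k::field \<Rightarrow> 'q::comm_monoid_mult \<Rightarrow> 'q) \<Rightarrow> bool" where
  "scalable_monoid smul \<longleftrightarrow>
     (\<forall>x. smul 1 x = x) \<and>
     (\<forall>a b x. smul a (smul b x) = smul (a * b) x) \<and>
     (\<forall>a x y. smul a (x * y) = smul a x * y \<and> smul a (x * y) = x * smul a y)"

definition q_invertible :: "'q::comm_monoid_mult \<Rightarrow> bool" where
  "q_invertible x \<longleftrightarrow> (\<exists>y. x * y = 1)"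

definition q_inv :: "'q::comm_monoid_mult \<Rightarrow> 'q" where
  "q_inv x = (THE y. x * y = 1)"

definition q_zpow :: "'q::comm_monoid_mult \<Rightarrow> int \<Rightarrow> 'q" where
  "q_zpow x k = (if 0 \<le> k then x ^ nat k else q_inv x ^ nat (- k))"

definition q_basis :: "('k::field \<Rightarrow> 'q::comm_monoid_mult \<Rightarrow> 'q) \<Rightarrow> 'q set \<Rightarrow> bool" where
  "q_basis smul E \<longleftrightarrow>
     finite E \<and> (\<forall>e\<in>E. q_invertible e) \<and>
     (\<forall>x. \<exists>!(mu, k). k \<in> E \<rightarrow>\<^sub>E (UNIV :: int set) \<and>
                       x = smul mu (\<Prod>e\<in>E. q_zpow e (k e)))"

definition quantity_space :: "('k::field \<Rightarrow> 'q::comm_monoid_mult \<Rightarrow> 'q) \<Rightarrow> bool" where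
  "quantity_space smul \<longleftrightarrow> scalable_monoid smul \<and> (\<exists>E. q_basis smul E)"

definition q_sim :: "('k::field \<Rightarrow> 'q::comm_monoid_mult \<Rightarrow> 'q) \<Rightarrow> 'q \<Rightarrow> 'q \<Rightarrow> bool" where
  "q_sim smul x y \<longleftrightarrow> (\<exists>a b. smul a x = smul b y)"

definition q_cls :: "('k::field \<Rightarrow> 'q::comm_monoid_mult \<Rightarrow> 'q) \<Rightarrow> 'q \<Rightarrow> 'q set" where
  "q_cls smul x = {y. q_sim smul x y}"

text \<open>The quotient Q/~ as a (HOL-Algebra) monoid of classes, with [x][y] = [xy].\<close>
definition q_quot :: "('k::field \<Rightarrow> 'q::comm_monoid_mult \<Rightarrow> 'q) \<Rightarrow> 'q set monoid" where
  "q_quot smul =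
     \<lparr> carrier = range (q_cls smul),
       monoid.mult = (\<lambda>A B. {z. \<exists>a\<in>A. \<exists>b\<in>B. q_sim smul z (a * b)}),
       monoid.one = q_cls smul 1 \<rparr>"

definition group_basis :: "('a, 'b) monoid_scheme \<Rightarrow> 'a set \<Rightarrow> bool" where
  "group_basis G B \<longleftrightarrow>
     finite B \<and> B \<subseteq> carrier G \<and>
     (\<forall>g\<in>carrier G. \<exists>!k. k \<in> B \<rightarrow>\<^sub>E (UNIV :: int set) \<and>
                        g = finprod G (\<lambda>\<epsilon>. \<epsilon> [^]\<^bsub>G\<^esub> (k \<epsilon>)) B)"

end

theory Submission
  imports Defs
begin

text \<open>Every class of \<open>Q/\<sim>\<close> contains an invertible element, e.g. a monomial in some basis
  of \<open>Q\<close>, so we may pick invertible representatives \<open>e\<^sub>i \<in> \<epsilon>\<^sub>i\<close>. Taking classes is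
  multiplicative, so the class of a monomial in the \<open>e\<^sub>i\<close> is the corresponding power product
  of the \<open>\<epsilon>\<^sub>i\<close>; hence every \<open>x\<close> is similar to exactly one such monomial. Finally, an
  element similar to an invertible \<open>P\<close> is \<open>\<mu> \<cdot> P\<close> for a unique scalar \<open>\<mu>\<close>, because the
  scalar in the basis expansion of an invertible element is nonzero.\<close>

definition q_monomial :: "'q set \<Rightarrow> ('q \<Rightarrow> int) \<Rightarrow> 'q::comm_monoid_mult" where
  "q_monomial E k = (\<Prod>e\<in>E. q_zpow e (k e))"

lemma q_basis_iff_monomial:
  "q_basis smul E \<longleftrightarrow> finite E \<and> (\<forall>e\<in>E. q_invertible e) \<and>
     (\<forall>x. \<exists>!(mu, k). k \<in> E \<rightarrow>\<^sub>E (UNIV :: int set) \<and> x = smul mu (q_monomial E k))"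
  by (simp add: q_basis_def q_monomial_def)

lemma q_quot_carrier: "carrier (q_quot smul) = range (q_cls smul)"
  by (simp add: q_quot_def)

lemma q_quot_one: "\<one>\<^bsub>q_quot smul\<^esub> = q_cls smul 1"
  by (simp add: q_quot_def)

context
  fixes smul :: "'k::field \<Rightarrow> 'q::comm_monoid_mult \<Rightarrow> 'q"
  assumes scalable: "scalable_monoid smul"
begin

lemma smul_one: "smul 1 x = x"
  using scalable unfolding scalable_monoid_def by blast

lemma smul_smul: "smul a (smul b x) = smul (a * b) x"
  using scalable unfolding scalable_monoid_def by blast

lemma smul_mult_left: "smul a (x * y) = smul a x * y"
  using scalable unfolding scalable_monoid_def by blast

lemma smul_mult_right: "smul a (x * y) = x * smul a y"
  using scalable unfolding scalable_monoid_def by blast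

lemma smul_mult_smul: "smul a x * smul b y = smul (a * b) (x * y)"
  by (metis smul_mult_left smul_mult_right smul_smul)

lemma q_sim_smul: "q_sim smul (smul a x) x"
  unfolding q_sim_def by (metis smul_one)

lemma q_sim_refl: "q_sim smul x x"
  unfolding q_sim_def by blast

lemma q_sim_sym: "q_sim smul x y \<Longrightarrow> q_sim smul y x"
  unfolding q_sim_def by metis

lemma q_sim_trans:
  assumes "q_sim smul x y" "q_sim smul y z"
  shows "q_sim smul x z"
proof -
  obtain a b where ab: "smul a x = smul b y" using assms(1) unfolding q_sim_def by blast
  obtain c d where cd: "smul c y = smul d z" using assms(2) unfolding q_sim_def by blast
  have "smul (c * a) x = smul (b * c) y" by (metis ab smul_smul mult.commute)
  also have "\<dots> = smul (b * d) z" by (metis cd smul_smul)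
  finally show ?thesis unfolding q_sim_def by blast
qed

lemma q_sim_mult:
  assumes "q_sim smul x x'" "q_sim smul y y'"
  shows "q_sim smul (x * y) (x' * y')"
proof -
  obtain a b where "smul a x = smul b x'" using assms(1) unfolding q_sim_def by blast
  moreover obtain c d where "smul c y = smul d y'" using assms(2) unfolding q_sim_def by blast
  ultimately have "smul (a * c) (x * y) = smul (b * d) (x' * y')" by (metis smul_mult_smul)
  then show ?thesis unfolding q_sim_def by blast
qed

lemma q_cls_eq_iff: "q_cls smul x = q_cls smul y \<longleftrightarrow> q_sim smul x y"
  unfolding q_cls_def using q_sim_refl q_sim_sym q_sim_trans by blast

lemma q_cls_self: "x \<in> q_cls smul x"
  by (simp add: q_cls_def q_sim_refl)

lemma q_quot_mult_cls:
  "q_cls smul x \<otimes>\<^bsub>q_quot smul\<^esub> q_cls smul y = q_cls smul (x * y)"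
proof -
  have "q_sim smul (x * y) z \<longleftrightarrow> (\<exists>a. q_sim smul x a \<and> (\<exists>b. q_sim smul y b \<and> q_sim smul z (a * b)))"
    for z
    using q_sim_refl q_sim_sym q_sim_trans q_sim_mult by meson
  then show ?thesis unfolding q_quot_def q_cls_def by auto
qed

lemma q_quot_pow_cls: "q_cls smul x [^]\<^bsub>q_quot smul\<^esub> (n::nat) = q_cls smul (x ^ n)"
  by (induction n) (simp_all add: q_quot_one q_quot_mult_cls mult.commute)

end

lemma q_inv_eq:
  fixes x :: "'q::comm_monoid_mult"
  assumes "x * y = 1"
  shows "q_inv x = y"
  unfolding q_inv_def
proof (rule the_equality)
  show "y' = y" if "x * y' = 1" for y'
    using that assms by (metis mult.assoc mult.commute mult_1_left)
qed (fact assms)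

lemma q_invertible_right_inverse: "q_invertible x \<Longrightarrow> x * q_inv x = 1"
  unfolding q_invertible_def using q_inv_eq by metis

lemma q_invertible_one: "q_invertible 1"
  by (simp add: q_invertible_def)

lemma q_invertible_mult: "q_invertible x \<Longrightarrow> q_invertible y \<Longrightarrow> q_invertible (x * y)"
  unfolding q_invertible_def by (metis mult.assoc mult.left_commute mult_1_right)

lemma q_invertible_power: "q_invertible x \<Longrightarrow> q_invertible (x ^ n)"
  by (induction n) (simp_all add: q_invertible_one q_invertible_mult)

lemma q_invertible_q_inv: "q_invertible x \<Longrightarrow> q_invertible (q_inv x)"
  unfolding q_invertible_def by (metis q_invertible_right_inverse q_invertible_def mult.commute)

lemma q_invertible_q_zpow: "q_invertible x \<Longrightarrow> q_invertible (q_zpow x k)"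
  by (simp add: q_zpow_def q_invertible_power q_invertible_q_inv)

lemma q_invertible_prod:
  "(\<And>a. a \<in> A \<Longrightarrow> q_invertible (h a)) \<Longrightarrow> q_invertible (\<Prod>a\<in>A. h a)"
  by (induction A rule: infinite_finite_induct) (simp_all add: q_invertible_one q_invertible_mult)

lemma q_invertible_q_monomial:
  "(\<And>e. e \<in> E \<Longrightarrow> q_invertible e) \<Longrightarrow> q_invertible (q_monomial E k)"
  unfolding q_monomial_def by (intro q_invertible_prod q_invertible_q_zpow)

context
  fixes smul :: "'k::field \<Rightarrow> 'q::comm_monoid_mult \<Rightarrow> 'q" and E :: "'q set"
  assumes scalable: "scalable_monoid smul" and basis: "q_basis smul E"
begin

lemma q_basis_expansion:
  obtains mu k where "k \<in> E \<rightarrow>\<^sub>E UNIV" "x = smul mu (q_monomial E k)"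
  using basis unfolding q_basis_iff_monomial by blast

lemma q_basis_expansion_unique:
  assumes "k \<in> E \<rightarrow>\<^sub>E UNIV" "k' \<in> E \<rightarrow>\<^sub>E UNIV"
    and "smul mu (q_monomial E k) = smul mu' (q_monomial E k')"
  shows "mu = mu'" "k = k'"
proof -
  let ?x = "smul mu (q_monomial E k)"
  have "\<exists>!(mu, k). k \<in> E \<rightarrow>\<^sub>E (UNIV :: int set) \<and> ?x = smul mu (q_monomial E k)"
    using basis unfolding q_basis_iff_monomial by blast
  then obtain p where p: "\<And>q. (case q of (mu, k) \<Rightarrow>
      k \<in> E \<rightarrow>\<^sub>E UNIV \<and> ?x = smul mu (q_monomial E k)) \<Longrightarrow> q = p"
    by (elim ex1E) blast
  have "(mu, k) = p" "(mu', k') = p" by (rule p; simp add: assms)+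
  then show "mu = mu'" "k = k'" by auto
qed

text \<open>If \<open>0 \<cdot> y\<close> were invertible, then \<open>0 \<cdot> 1 = 1 = 1 \<cdot> 1\<close>, giving \<open>1\<close> two expansions.\<close>
lemma smul_zero_not_invertible: "\<not> q_invertible (smul 0 y)"
proof
  assume "q_invertible (smul 0 y)"
  then obtain w where "smul 0 y * w = 1" unfolding q_invertible_def by blast
  then have one: "smul 0 (y * w) = 1" by (simp add: smul_mult_left[OF scalable])
  then have "smul 0 1 = smul 0 (y * w)" by (metis smul_smul[OF scalable] mult_zero_left)
  then have "smul 0 (q_monomial E (\<lambda>_\<in>E. 0)) = smul 1 (q_monomial E (\<lambda>_\<in>E. 0))"
    using one by (simp add: q_monomial_def q_zpow_def smul_one[OF scalable])
  then have "(0::'k) = 1" by (rule q_basis_expansion_unique(1)[rotated 2]) simp_all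
  then show False by simp
qed

lemma q_invertible_expansion:
  assumes "q_invertible P"
  obtains \<nu> j where "\<nu> \<noteq> 0" "j \<in> E \<rightarrow>\<^sub>E UNIV" "P = smul \<nu> (q_monomial E j)"
  using q_basis_expansion assms smul_zero_not_invertible by metis

end

lemma ex1_PiE_reindex:
  fixes h :: "'a \<Rightarrow> 'b" and S :: "'c set"
  assumes "inj_on h A"
  shows "(\<exists>!\<kappa>. \<kappa> \<in> h ` A \<rightarrow>\<^sub>E S \<and> P (\<lambda>a\<in>A. \<kappa> (h a))) \<longleftrightarrow> (\<exists>!k. k \<in> A \<rightarrow>\<^sub>E S \<and> P k)"
proof -
  define \<Phi> where "\<Phi> \<kappa> = (\<lambda>a\<in>A. \<kappa> (h a))" for \<kappa> :: "'b \<Rightarrow> 'c"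
  define \<Psi> where "\<Psi> k = (\<lambda>b\<in>h ` A. k (inv_into A h b))" for k :: "'a \<Rightarrow> 'c"
  have \<Phi>: "\<Phi> \<kappa> \<in> A \<rightarrow>\<^sub>E S" if "\<kappa> \<in> h ` A \<rightarrow>\<^sub>E S" for \<kappa>
    using that by (auto simp: \<Phi>_def)
  have \<Psi>: "\<Psi> k \<in> h ` A \<rightarrow>\<^sub>E S" "\<Phi> (\<Psi> k) = k" if "k \<in> A \<rightarrow>\<^sub>E S" for k
    using that assms by (auto simp: \<Phi>_def \<Psi>_def PiE_iff extensional_def)
  have \<Phi>_inj: "\<kappa> = \<kappa>'"
    if "\<kappa> \<in> h ` A \<rightarrow>\<^sub>E S" "\<kappa>' \<in> h ` A \<rightarrow>\<^sub>E S" "\<Phi> \<kappa> = \<Phi> \<kappa>'" for \<kappa> \<kappa>'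
  proof (rule PiE_ext[OF that(1,2)])
    fix b assume "b \<in> h ` A"
    then obtain a where "a \<in> A" "b = h a" by blast
    then show "\<kappa> b = \<kappa>' b" using fun_cong[OF that(3), of a] by (simp add: \<Phi>_def)
  qed
  show ?thesis
    unfolding \<Phi>_def[symmetric]
  proof
    assume "\<exists>!\<kappa>. \<kappa> \<in> h ` A \<rightarrow>\<^sub>E S \<and> P (\<Phi> \<kappa>)"
    then obtain \<kappa> where \<kappa>: "\<kappa> \<in> h ` A \<rightarrow>\<^sub>E S" "P (\<Phi> \<kappa>)"
      and uniq: "\<And>\<kappa>'. \<kappa>' \<in> h ` A \<rightarrow>\<^sub>E S \<Longrightarrow> P (\<Phi> \<kappa>') \<Longrightarrow> \<kappa>' = \<kappa>"
      by (elim ex1E) auto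
    show "\<exists>!k. k \<in> A \<rightarrow>\<^sub>E S \<and> P k"
    proof (rule ex1I)
      show "\<Phi> \<kappa> \<in> A \<rightarrow>\<^sub>E S \<and> P (\<Phi> \<kappa>)" using \<Phi> \<kappa> by blast
      show "k = \<Phi> \<kappa>" if "k \<in> A \<rightarrow>\<^sub>E S \<and> P k" for k
        using that \<Psi>[of k] uniq[of "\<Psi> k"] by auto
    qed
  next
    assume "\<exists>!k. k \<in> A \<rightarrow>\<^sub>E S \<and> P k"
    then obtain k where k: "k \<in> A \<rightarrow>\<^sub>E S" "P k"
      and uniq: "\<And>k'. k' \<in> A \<rightarrow>\<^sub>E S \<Longrightarrow> P k' \<Longrightarrow> k' = k"
      by (elim ex1E) auto
    show "\<exists>!\<kappa>. \<kappa> \<in> h ` A \<rightarrow>\<^sub>E S \<and> P (\<Phi> \<kappa>)"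
    proof (rule ex1I)
      show "\<Psi> k \<in> h ` A \<rightarrow>\<^sub>E S \<and> P (\<Phi> (\<Psi> k))" using \<Psi> k by simp
      show "\<kappa> = \<Psi> k" if "\<kappa> \<in> h ` A \<rightarrow>\<^sub>E S \<and> P (\<Phi> \<kappa>)" for \<kappa>
        using that \<Phi> \<Psi> k uniq \<Phi>_inj by metis
    qed
  qed
qed

lemma (in comm_group) group_basis_image_iff:
  assumes "inj_on h A" "h ` A \<subseteq> carrier G"
  shows "group_basis G (h ` A) \<longleftrightarrow> finite A \<and>
    (\<forall>g\<in>carrier G. \<exists>!k. k \<in> A \<rightarrow>\<^sub>E UNIV \<and> g = (\<Otimes>a\<in>A. h a [^] (k a :: int)))"
proof -
  have reindex: "(\<Otimes>\<epsilon>\<in>h ` A. \<epsilon> [^] (\<kappa> \<epsilon> :: int))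
      = (\<Otimes>a\<in>A. h a [^] (\<lambda>a\<in>A. \<kappa> (h a)) a)" for \<kappa>
  proof -
    have "(\<Otimes>\<epsilon>\<in>h ` A. \<epsilon> [^] (\<kappa> \<epsilon> :: int)) = (\<Otimes>a\<in>A. h a [^] \<kappa> (h a))"
      using assms by (intro finprod_reindex) auto
    also have "\<dots> = (\<Otimes>a\<in>A. h a [^] (\<lambda>a\<in>A. \<kappa> (h a)) a)"
      using assms by (intro finprod_cong') auto
    finally show ?thesis .
  qed
  have "(\<exists>!\<kappa>. \<kappa> \<in> h ` A \<rightarrow>\<^sub>E UNIV \<and> g = (\<Otimes>\<epsilon>\<in>h ` A. \<epsilon> [^] (\<kappa> \<epsilon> :: int)))
      \<longleftrightarrow> (\<exists>!k. k \<in> A \<rightarrow>\<^sub>E UNIV \<and> g = (\<Otimes>a\<in>A. h a [^] (k a :: int)))" for g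
    unfolding reindex
    by (rule ex1_PiE_reindex[OF assms(1), where P = "\<lambda>k. g = (\<Otimes>a\<in>A. h a [^] k a)"])
  then show ?thesis
    unfolding group_basis_def using assms by (simp add: finite_image_iff)
qed

context
  fixes smul :: "'k::field \<Rightarrow> 'q::comm_monoid_mult \<Rightarrow> 'q"
  assumes qspace: "quantity_space smul"
begin

lemma quantity_space_scalable: "scalable_monoid smul"
  using qspace by (simp add: quantity_space_def)

lemma q_sim_invertible_iff:
  assumes "q_invertible P"
  shows "q_sim smul x P \<longleftrightarrow> (\<exists>mu. x = smul mu P)"
proof
  assume "q_sim smul x P"
  then obtain a b where ab: "smul a x = smul b P" unfolding q_sim_def by blast
  obtain E where basis: "q_basis smul E" using qspace by (auto simp: quantity_space_def)
  obtain \<nu> j where \<nu>: "\<nu> \<noteq> 0" and j: "j \<in> E \<rightarrow>\<^sub>E UNIV" and P: "P = smul \<nu> (q_monomial E j)"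
    using q_invertible_expansion[OF quantity_space_scalable basis assms] .
  obtain mu k where k: "k \<in> E \<rightarrow>\<^sub>E UNIV" and x: "x = smul mu (q_monomial E k)"
    using q_basis_expansion[OF quantity_space_scalable basis] .
  have "smul (a * mu) (q_monomial E k) = smul (b * \<nu>) (q_monomial E j)"
    using ab by (simp add: x P smul_smul[OF quantity_space_scalable])
  then have "k = j"
    using q_basis_expansion_unique(2)[OF quantity_space_scalable basis k j] by blast
  then have "x = smul (mu / \<nu>) P"
    using \<nu> by (simp add: x P smul_smul[OF quantity_space_scalable])
  then show "\<exists>mu. x = smul mu P" ..
next
  assume "\<exists>mu. x = smul mu P"
  then show "q_sim smul x P" using q_sim_smul[OF quantity_space_scalable] by blast
qed

lemma smul_invertible_cancel:
  assumes "q_invertible P"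
  shows "smul mu P = smul mu' P \<longleftrightarrow> mu = mu'"
proof
  assume eq: "smul mu P = smul mu' P"
  obtain E where basis: "q_basis smul E" using qspace by (auto simp: quantity_space_def)
  obtain \<nu> j where \<nu>: "\<nu> \<noteq> 0" and j: "j \<in> E \<rightarrow>\<^sub>E UNIV" and P: "P = smul \<nu> (q_monomial E j)"
    using q_invertible_expansion[OF quantity_space_scalable basis assms] .
  have "smul (mu * \<nu>) (q_monomial E j) = smul (mu' * \<nu>) (q_monomial E j)"
    using eq by (simp add: P smul_smul[OF quantity_space_scalable])
  then have "mu * \<nu> = mu' * \<nu>"
    using q_basis_expansion_unique(1)[OF quantity_space_scalable basis j j] by blast
  then show "mu = mu'" using \<nu> by simp
qed simp

lemma ex_invertible_q_sim: "\<exists>P. q_invertible P \<and> q_sim smul x P"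
proof -
  obtain E where basis: "q_basis smul E" using qspace by (auto simp: quantity_space_def)
  obtain mu k where "x = smul mu (q_monomial E k)"
    using q_basis_expansion[OF quantity_space_scalable basis] .
  moreover have "q_invertible (q_monomial E k)"
    using basis by (intro q_invertible_q_monomial) (simp add: q_basis_def)
  ultimately show ?thesis using q_sim_smul[OF quantity_space_scalable] by blast
qed

lemma comm_group_q_quot: "comm_group (q_quot smul)"
proof (rule comm_groupI)
  fix U V W assume "U \<in> carrier (q_quot smul)" "V \<in> carrier (q_quot smul)" "W \<in> carrier (q_quot smul)"
  then obtain x y z where "U = q_cls smul x" "V = q_cls smul y" "W = q_cls smul z"
    by (auto simp: q_quot_carrier)
  then show "U \<otimes>\<^bsub>q_quot smul\<^esub> V \<in> carrier (q_quot smul)"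
    and "U \<otimes>\<^bsub>q_quot smul\<^esub> V \<otimes>\<^bsub>q_quot smul\<^esub> W = U \<otimes>\<^bsub>q_quot smul\<^esub> (V \<otimes>\<^bsub>q_quot smul\<^esub> W)"
    and "U \<otimes>\<^bsub>q_quot smul\<^esub> V = V \<otimes>\<^bsub>q_quot smul\<^esub> U"
    and "\<one>\<^bsub>q_quot smul\<^esub> \<otimes>\<^bsub>q_quot smul\<^esub> U = U"
    by (simp_all add: q_quot_mult_cls[OF quantity_space_scalable] q_quot_carrier q_quot_one mult_ac)
next
  show "\<one>\<^bsub>q_quot smul\<^esub> \<in> carrier (q_quot smul)" by (simp add: q_quot_one q_quot_carrier)
next
  fix U assume "U \<in> carrier (q_quot smul)"
  then obtain x where U: "U = q_cls smul x" by (auto simp: q_quot_carrier)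
  obtain P where P: "q_invertible P" "q_sim smul x P" using ex_invertible_q_sim by blast
  then obtain w where "P * w = 1" unfolding q_invertible_def by blast
  moreover have "q_sim smul (w * x) (w * P)"
    using q_sim_mult[OF quantity_space_scalable q_sim_refl[OF quantity_space_scalable] P(2)] .
  ultimately have "q_cls smul w \<otimes>\<^bsub>q_quot smul\<^esub> U = \<one>\<^bsub>q_quot smul\<^esub>"
    by (simp add: U q_quot_one q_quot_mult_cls[OF quantity_space_scalable]
        q_cls_eq_iff[OF quantity_space_scalable] mult.commute)
  then show "\<exists>V\<in>carrier (q_quot smul). V \<otimes>\<^bsub>q_quot smul\<^esub> U = \<one>\<^bsub>q_quot smul\<^esub>"
    by (auto simp: q_quot_carrier)
qed

interpretation Q: comm_group "q_quot smul"
  by (rule comm_group_q_quot)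

lemma q_quot_int_pow_cls:
  assumes "q_invertible x"
  shows "q_cls smul x [^]\<^bsub>q_quot smul\<^esub> (k::int) = q_cls smul (q_zpow x k)"
proof (cases "k < 0")
  case True
  have "q_cls smul (q_inv x ^ nat (- k)) \<otimes>\<^bsub>q_quot smul\<^esub> q_cls smul (x ^ nat (- k))
      = \<one>\<^bsub>q_quot smul\<^esub>"
    using q_invertible_right_inverse[OF assms]
    by (simp add: q_quot_one q_quot_mult_cls[OF quantity_space_scalable]
        power_mult_distrib[symmetric] mult.commute)
  then have "inv\<^bsub>q_quot smul\<^esub> (q_cls smul (x ^ nat (- k))) = q_cls smul (q_inv x ^ nat (- k))"
    by (intro Q.inv_equality) (auto simp: q_quot_carrier)
  then show ?thesis
    using True by (simp add: int_pow_def2 q_zpow_def q_quot_pow_cls[OF quantity_space_scalable])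
qed (simp add: int_pow_def2 q_zpow_def q_quot_pow_cls[OF quantity_space_scalable])

lemma q_quot_finprod_cls:
  "finite A \<Longrightarrow> (\<Otimes>\<^bsub>q_quot smul\<^esub>a\<in>A. q_cls smul (h a)) = q_cls smul (\<Prod>a\<in>A. h a)"
  by (induction A rule: finite_induct)
    (simp_all add: q_quot_one q_quot_carrier q_quot_mult_cls[OF quantity_space_scalable] Pi_def)

lemma q_quot_cls_monomial:
  assumes "finite E" "\<And>e. e \<in> E \<Longrightarrow> q_invertible e"
  shows "q_cls smul (q_monomial E k)
    = (\<Otimes>\<^bsub>q_quot smul\<^esub>e\<in>E. q_cls smul e [^]\<^bsub>q_quot smul\<^esub> k e)"
proof -
  have "(\<Otimes>\<^bsub>q_quot smul\<^esub>e\<in>E. q_cls smul e [^]\<^bsub>q_quot smul\<^esub> k e)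
      = (\<Otimes>\<^bsub>q_quot smul\<^esub>e\<in>E. q_cls smul (q_zpow e (k e)))"
    using assms(2) by (intro Q.finprod_cong') (auto simp: q_quot_int_pow_cls q_quot_carrier)
  then show ?thesis by (simp add: q_monomial_def q_quot_finprod_cls assms(1))
qed

lemma q_basis_if_group_basis_of_classes:
  assumes invertible: "\<And>e. e \<in> E \<Longrightarrow> q_invertible e"
    and inj: "inj_on (q_cls smul) E"
    and group_basis: "group_basis (q_quot smul) (q_cls smul ` E)"
  shows "q_basis smul E"
proof -
  have "q_cls smul ` E \<subseteq> carrier (q_quot smul)"
    by (auto simp: q_quot_carrier)
  then have fin: "finite E"
    and class_expansion: "\<And>x. \<exists>!k. k \<in> E \<rightarrow>\<^sub>E UNIV \<and>
      q_cls smul x = (\<Otimes>\<^bsub>q_quot smul\<^esub>e\<in>E. q_cls smul e [^]\<^bsub>q_quot smul\<^esub> (k e :: int))"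
    using group_basis Q.group_basis_image_iff[OF inj] by (simp_all add: q_quot_carrier)
  have class_eq_iff: "(q_cls smul x = (\<Otimes>\<^bsub>q_quot smul\<^esub>e\<in>E. q_cls smul e [^]\<^bsub>q_quot smul\<^esub> k e))
      \<longleftrightarrow> (\<exists>mu. x = smul mu (q_monomial E k))" for x k
    using invertible fin
    by (simp add: q_quot_cls_monomial[symmetric] q_cls_eq_iff[OF quantity_space_scalable]
        q_sim_invertible_iff q_invertible_q_monomial)
  then have "\<exists>!k. k \<in> E \<rightarrow>\<^sub>E UNIV \<and> (\<exists>mu. x = smul mu (q_monomial E k))" for x
    using class_expansion[of x] by (simp only: class_eq_iff)
  moreover have "mu = mu'" if "smul mu (q_monomial E k) = smul mu' (q_monomial E k)" for mu mu' k
    using that invertible by (simp add: smul_invertible_cancel q_invertible_q_monomial)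
  ultimately have "\<exists>!(mu, k). k \<in> E \<rightarrow>\<^sub>E UNIV \<and> x = smul mu (q_monomial E k)" for x
    unfolding Ex1_def by (simp add: split_paired_all) metis
  then show ?thesis
    using fin invertible by (simp add: q_basis_iff_monomial)
qed

end

theorem proposition3p24:
  fixes smul :: "'k::field \<Rightarrow> 'q::comm_monoid_mult \<Rightarrow> 'q"
    and B :: "'q set set"
  assumes "quantity_space smul"
    and "group_basis (q_quot smul) B"
  shows "\<exists>f. (\<forall>\<epsilon>\<in>B. f \<epsilon> \<in> \<epsilon>) \<and> inj_on f B \<and> q_basis smul (f ` B)"
proof -
  note scalable = quantity_space_scalable[OF assms(1)]
  have "\<exists>P. q_invertible P \<and> q_cls smul P = \<epsilon>" if "\<epsilon> \<in> B" for \<epsilon>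
  proof -
    obtain x where x: "\<epsilon> = q_cls smul x"
      using \<open>\<epsilon> \<in> B\<close> assms(2) by (auto simp: group_basis_def q_quot_carrier)
    obtain P where "q_invertible P" "q_sim smul x P"
      using ex_invertible_q_sim[OF assms(1)] by blast
    then show ?thesis
      using x q_cls_eq_iff[OF scalable] by blast
  qed
  then obtain f where f: "\<And>\<epsilon>. \<epsilon> \<in> B \<Longrightarrow> q_invertible (f \<epsilon>) \<and> q_cls smul (f \<epsilon>) = \<epsilon>"
    by metis
  have "inj_on (q_cls smul \<circ> f) B"
    using f by (simp add: inj_on_def)
  then have inj_f: "inj_on f B" and inj_cls: "inj_on (q_cls smul) (f ` B)"
    by (rule inj_on_imageI2, rule inj_on_imageI)
  have "q_cls smul ` f ` B = B"
    using f by (simp add: image_image)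
  then have "q_basis smul (f ` B)"
    using q_basis_if_group_basis_of_classes[OF assms(1) _ inj_cls] f assms(2) by auto
  moreover have "f \<epsilon> \<in> \<epsilon>" if "\<epsilon> \<in> B" for \<epsilon>
    using q_cls_self[OF scalable, of "f \<epsilon>"] f[OF that] by simp
  ultimately show ?thesis
    using inj_f by blast
qed

end
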